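(* Consider the $k$-means++ seeding algorithm run for $k+\Delta$ steps on a finite set $\mathbf{X}\subset\mathbb{R}^d$ with a fixed optimal $k$-clustering $\mathcal{P}=\{P_1,\dots,P_k\}$. For any cluster $P\in\mathcal{P}$ and any $t\le k+\Delta$ such that $\Delta-M(C_t)\ge2$, $$\mathbb{E}\big[U(P,C_{k+\Delta})\mid C_t\big]\le\frac{\widetilde H_t(\mathbf{X})}{e\,(\Delta-M(C_t)-1)}.$$
   Context: For a finite $C\subset\mathbb{R}^d$, $\mathrm{cost}(x,C)=\min_{c\in C}\|x-c\|^2$, $\mathrm{cost}(\mathbf{Y},C)=\sum_{x\in\mathbf{Y}}\mathrm{cost}(x,C)$, $\mathrm{OPT}_i(\mathbf{Y})=\min_{|C|=i}\mathrm{cost}(\mathbf{Y},C)$. $k$-means++ seeding: $c_1$ uniform from $\mathbf{X}$, $C_1=\{c_1\}$; $C_{t+1}=C_t\cup\{x\}$ with $x$ chosen with probability $\mathrm{cost}(x,C_t)/\mathrm{cost}(\mathbf{X},C_t)$; centers are ordered by the time they are chosen. $P_1,\dots,P_k$ is a fixed optimal $k$-means clustering of $\mathbf{X}$. $P_i$ is covered by $C$ if $C\cap P_i\ne\varnothing$. $U(P_i,C)=\mathrm{cost}(P_i,C)$ if $P_i$ is not covered by $C$ and $0$ otherwise. A center $c\in C$ is a miss if an earlier center of $C$ lies in the same cluster $P_i$ as $c$; $M(C)$ is the number of misses. $\widetilde H_t(P_i)=\mathrm{cost}(P_i,C_{t_i})$ if $P_i$ is covered by $C_t$, where $t_i\le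 t$ is the first time $P_i$ is covered, and $\widetilde H_t(P_i)=5\,\mathrm{OPT}_1(P_i)$ otherwise; $\widetilde H_t(\mathbf{X})=\sum_i\widetilde H_t(P_i)$. *)

theory Defs
  imports "HOL-Analysis.Analysis" "HOL-Probability.Probability_Mass_Function"
begin

definition cost_pt :: "'a::euclidean_space \<Rightarrow> 'a set \<Rightarrow> real" where
  "cost_pt x C = Min ((\<lambda>c. (norm (x - c))^2) ` C)"

definition cost_set :: "'a::euclidean_space set \<Rightarrow> 'a set \<Rightarrow> real" where
  "cost_set Y C = (\<Sum>x\<in>Y. cost_pt x C)"

definition OPT :: "nat \<Rightarrow> 'a::euclidean_space set \<Rightarrow> real" where
  "OPT i Y = Inf {cost_set Y C | C. finite C \<and> card C = i}"

definition optimal_clustering :: "'a::euclidean_space set \<Rightarrow> nat \<Rightarrow> (nat \<Rightarrow> 'a set) \<Rightarrow> bool" where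
  "optimal_clustering X k P \<longleftrightarrow>
     (\<Union>i<k. P i) = X \<and> (\<forall>i<k. \<forall>j<k. i \<noteq> j \<longrightarrow> P i \<inter> P j = {}) \<and>
     (\<Sum>i<k. OPT 1 (P i)) = OPT k X"

definition d2_pmf :: "'a::euclidean_space set \<Rightarrow> 'a set \<Rightarrow> 'a pmf" where
  "d2_pmf X C = embed_pmf (\<lambda>x. if x \<in> X then cost_pt x C / cost_set X C else 0)"

text \<open>One step of k-means++ seeding; centres are kept as a list in the order chosen.
  (If all points have cost 0, the choice is uniform; this is a convention only.)\<close>
definition kpp_step :: "'a::euclidean_space set \<Rightarrow> 'a list \<Rightarrow> 'a list pmf" where
  "kpp_step X cs =
     (if cs = [] then map_pmf (\<lambda>x. [x]) (pmf_of_set X)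
      else if cost_set X (set cs) = 0 then map_pmf (\<lambda>x. cs @ [x]) (pmf_of_set X)
      else map_pmf (\<lambda>x. cs @ [x]) (d2_pmf X (set cs)))"

primrec kpp_run :: "'a::euclidean_space set \<Rightarrow> nat \<Rightarrow> 'a list \<Rightarrow> 'a list pmf" where
  "kpp_run X 0 cs = return_pmf cs"
| "kpp_run X (Suc n) cs = kpp_run X n cs \<bind> kpp_step X"

definition U :: "'a::euclidean_space set \<Rightarrow> 'a set \<Rightarrow> real" where
  "U Q C = (if Q \<inter> C = {} then cost_set Q C else 0)"

definition misses :: "nat \<Rightarrow> (nat \<Rightarrow> 'a set) \<Rightarrow> 'a list \<Rightarrow> nat" where
  "misses k P cs = card {j. j < length cs \<and>
      (\<exists>j'<j. \<exists>i<k. cs ! j' \<in> P i \<and> cs ! j \<in> P i)}"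

definition Htilde_cl :: "'a::euclidean_space set \<Rightarrow> 'a list \<Rightarrow> real" where
  "Htilde_cl Q cs =
     (if Q \<inter> set cs \<noteq> {}
      then cost_set Q (set (take (LEAST s. Q \<inter> set (take s cs) \<noteq> {}) cs))
      else 5 * OPT 1 Q)"

definition Htilde :: "nat \<Rightarrow> (nat \<Rightarrow> 'a::euclidean_space set) \<Rightarrow> 'a list \<Rightarrow> real" where
  "Htilde k P cs = (\<Sum>i<k. Htilde_cl (P i) cs)"

end

theory Submission
  imports Defs
begin

text \<open>Let R steps remain after the prefix C of centres, let u clusters be uncovered by C,
  m = R - u, H = H-tilde(X) and V = U(P_i, C). We show by induction on R that the expected final
  value of U(P_i, -) is at most V Phi_m(H/V), where for m \<ge> 0 Phi_m is the least concave
  majorant of (x/(1+x))^(m+1). A D^2-sampled centre lands in P_i (U drops to 0), in a covered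
  cluster (m drops by one, H is unchanged) or in an uncovered cluster P_j (m is unchanged and H
  changes by cost(P_j, C + c) - 5 OPT_1(P_j); by the 5-approximation and Jensen's inequality for
  the concave Phi_m this does not increase the bound on average). The recursion
  x Phi_(m-1)(x) \<le> (1+x) Phi_m(x) pays for the covered clusters out of the mass of P_i. Every
  centre covers a new cluster or is a miss, so m = \<Delta> - M(C_t) at time t, and
  Phi_m(x) \<le> x / (e (m - 1)) gives the theorem.\<close>

section \<open>Squared-distance costs and the 5-approximation\<close>

lemma cost_pt_le: "finite C \<Longrightarrow> c \<in> C \<Longrightarrow> cost_pt x C \<le> (norm (x - c))\<^sup>2"
  unfolding cost_pt_def by (rule Min_le) auto

lemma cost_pt_attained:
  assumes "finite C" "C \<noteq> {}"
  obtains c where "c \<in> C" "cost_pt x C = (norm (x - c))\<^sup>2"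
proof -
  have "cost_pt x C \<in> (\<lambda>c. (norm (x - c))\<^sup>2) ` C"
    unfolding cost_pt_def using assms by (intro Min_in) auto
  then show ?thesis using that by blast
qed

lemma cost_pt_nonneg: "finite C \<Longrightarrow> C \<noteq> {} \<Longrightarrow> 0 \<le> cost_pt x C"
  by (metis cost_pt_attained zero_le_power2)

lemma cost_pt_eq_0_iff: "finite C \<Longrightarrow> C \<noteq> {} \<Longrightarrow> cost_pt x C = 0 \<longleftrightarrow> x \<in> C"
  by (metis cost_pt_attained cost_pt_le cost_pt_nonneg norm_zero power_zero_numeral
      order_antisym right_minus_eq zero_eq_power2 norm_eq_zero)

lemma cost_pt_antimono: "finite D \<Longrightarrow> C \<subseteq> D \<Longrightarrow> C \<noteq> {} \<Longrightarrow> cost_pt x D \<le> cost_pt x C"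
  by (metis cost_pt_attained cost_pt_le finite_subset subsetD)

lemma cost_pt_singleton [simp]: "cost_pt x {c} = (norm (x - c))\<^sup>2"
  unfolding cost_pt_def by simp

lemma cost_pt_le_relaxed_triangle:
  assumes "finite C" "C \<noteq> {}"
  shows "cost_pt c C \<le> 2 * cost_pt y C + 2 * (norm (y - c))\<^sup>2"
proof -
  obtain d where d: "d \<in> C" "cost_pt y C = (norm (y - d))\<^sup>2"
    using cost_pt_attained[OF assms] by blast
  have "norm (c - d) \<le> norm (y - c) + norm (y - d)"
    using norm_triangle_ineq[of "c - y" "y - d"] by (simp add: norm_minus_commute)
  then have "cost_pt c C \<le> (norm (y - c) + norm (y - d))\<^sup>2"
    using cost_pt_le[OF assms(1) d(1), of c] by (smt (verit) norm_ge_zero power_mono)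
  also have "\<dots> \<le> 2 * (norm (y - d))\<^sup>2 + 2 * (norm (y - c))\<^sup>2"
    using sum_squares_ge_zero[of "norm (y - c) - norm (y - d)" 0]
    by (simp add: power2_eq_square algebra_simps)
  finally show ?thesis using d by simp
qed

lemma cost_set_nonneg: "finite C \<Longrightarrow> C \<noteq> {} \<Longrightarrow> 0 \<le> cost_set Y C"
  unfolding cost_set_def by (intro sum_nonneg cost_pt_nonneg)

lemma cost_set_antimono: "finite D \<Longrightarrow> C \<subseteq> D \<Longrightarrow> C \<noteq> {} \<Longrightarrow> cost_set Y D \<le> cost_set Y C"
  unfolding cost_set_def by (intro sum_mono cost_pt_antimono)

lemma cost_set_singleton: "cost_set Y {c} = (\<Sum>x\<in>Y. (norm (x - c))\<^sup>2)"
  unfolding cost_set_def by simp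

lemma OPT1_le_cost_set_singleton: "OPT 1 Q \<le> cost_set Q {c}"
proof -
  have "bdd_below {cost_set Q C | C. finite C \<and> card C = 1}"
    by (rule bdd_belowI[of _ 0]) (auto intro: cost_set_nonneg)
  then show ?thesis
    unfolding OPT_def by (rule cInf_lower[rotated]) (auto intro!: exI[of _ "{c}"])
qed

lemma OPT1_ge:
  fixes Q :: "'a::euclidean_space set"
  assumes "\<And>c. v \<le> cost_set Q {c}"
  shows "v \<le> OPT 1 Q"
  unfolding OPT_def
proof (rule cInf_greatest)
  show "{cost_set Q C | C. finite C \<and> card C = 1} \<noteq> {}"
    by (auto intro!: exI[of _ "{0::'a}"])
qed (auto simp: card_Suc_eq assms)

lemma OPT1_nonneg: "0 \<le> OPT 1 (Q :: 'a::euclidean_space set)"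
  by (rule OPT1_ge) (simp add: cost_set_nonneg)

lemma sum_norm_diff_squared_centroid:
  fixes Q :: "'a::euclidean_space set"
  assumes "finite Q" "Q \<noteq> {}"
  defines "\<mu> \<equiv> (1 / real (card Q)) *\<^sub>R (\<Sum>x\<in>Q. x)"
  shows "(\<Sum>x\<in>Q. (norm (x - c))\<^sup>2) = (\<Sum>x\<in>Q. (norm (x - \<mu>))\<^sup>2) + real (card Q) * (norm (c - \<mu>))\<^sup>2"
proof -
  have "(\<Sum>x\<in>Q. x - \<mu>) = 0"
    using assms by (simp add: \<mu>_def sum_subtractf sum_constant_scaleR card_gt_0_iff)
  then have cross: "(\<Sum>x\<in>Q. inner (x - \<mu>) (\<mu> - c)) = 0"
    by (simp add: inner_sum_left[symmetric])
  have "(norm (x - c))\<^sup>2 = (norm (x - \<mu>))\<^sup>2 + 2 * inner (x - \<mu>) (\<mu> - c) + (norm (c - \<mu>))\<^sup>2" for x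
  proof -
    have "x - c = (x - \<mu>) + (\<mu> - c)" by simp
    then show ?thesis
      by (simp only: power2_norm_eq_inner)
         (simp add: inner_add_left inner_add_right inner_commute inner_diff_left inner_diff_right)
  qed
  then show ?thesis
    by (simp add: sum.distrib sum_distrib_left[symmetric] cross)
qed

lemma sum_cost_set_singleton_le_2_OPT1:
  fixes Q :: "'a::euclidean_space set"
  assumes "finite Q" "Q \<noteq> {}"
  shows "(\<Sum>c\<in>Q. cost_set Q {c}) \<le> 2 * real (card Q) * OPT 1 Q"
proof -
  define \<mu> where "\<mu> = (1 / real (card Q)) *\<^sub>R (\<Sum>x\<in>Q. x)"
  define V where "V = (\<Sum>x\<in>Q. (norm (x - \<mu>))\<^sup>2)"
  have centroid: "cost_set Q {c} = V + real (card Q) * (norm (c - \<mu>))\<^sup>2" for c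
    unfolding cost_set_singleton V_def \<mu>_def by (rule sum_norm_diff_squared_centroid[OF assms])
  have "V \<le> OPT 1 Q"
    by (rule OPT1_ge) (simp add: centroid)
  moreover have "(\<Sum>c\<in>Q. cost_set Q {c}) = 2 * real (card Q) * V"
    unfolding centroid by (simp add: sum.distrib sum_distrib_left[symmetric] V_def norm_minus_commute)
  ultimately show ?thesis by (simp add: mult_left_mono)
qed

text \<open>The pointwise form of the 5-approximation, for a = cost(c,C), w = cost(Q, C + c),
  A = cost(Q,C), S = cost(Q,{c}), Opt = OPT_1(Q) and N = |Q|.\<close>
lemma D2_weighted_cost_arith:
  fixes a w A S Opt N :: real
  assumes "N > 0" "a \<ge> 0" "A \<ge> 0" "Opt \<ge> 0"
    and "w \<le> A" "w \<le> S" "Opt \<le> S" "N * a \<le> 2 * A + 2 * S"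
  shows "a * w \<le> a * Opt + 4 * A / N * (S - Opt)"
proof -
  have "N * (a * w) \<le> N * (a * Opt) + 4 * A * (S - Opt)"
  proof (cases "w \<le> Opt")
    case True
    have "N * (a * w) \<le> N * (a * Opt)" using True assms by (intro mult_left_mono) auto
    moreover have "0 \<le> 4 * A * (S - Opt)" using assms by simp
    ultimately show ?thesis by linarith
  next
    case False
    then have "N * a * (w - Opt) \<le> (2 * A + 2 * S) * (w - Opt)"
      using assms by (intro mult_right_mono) auto
    also have "\<dots> \<le> 4 * A * (S - Opt)"
    proof (cases "S \<le> A")
      case True
      have "(2 * A + 2 * S) * (w - Opt) \<le> 4 * A * (w - Opt)"
        using True False by (intro mult_right_mono) auto
      also have "\<dots> \<le> 4 * A * (S - Opt)"
        using assms by (intro mult_left_mono) auto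
      finally show ?thesis .
    next
      case S_gt_A: False
      have "(2 * A + 2 * S) * (w - Opt) \<le> 4 * S * (A - Opt)"
        using S_gt_A False assms by (intro mult_mono) auto
      also have "\<dots> \<le> 4 * A * (S - Opt)"
      proof -
        have "A * Opt \<le> S * Opt" using S_gt_A assms by (intro mult_right_mono) auto
        then show ?thesis by (simp add: algebra_simps)
      qed
      finally show ?thesis .
    qed
    finally show ?thesis by (simp add: algebra_simps)
  qed
  then have "N * (a * w) \<le> N * (a * Opt + 4 * A / N * (S - Opt))"
    using assms(1) by (simp add: distrib_left)
  then show ?thesis using assms(1) by (simp add: mult_le_cancel_left_pos)
qed

lemma sum_D2_weighted_cost_le_5_OPT1:
  fixes Q C :: "'a::euclidean_space set"
  assumes Q: "finite Q" "Q \<noteq> {}" and C: "finite C" "C \<noteq> {}"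
  shows "(\<Sum>c\<in>Q. cost_pt c C * cost_set Q (insert c C)) \<le> 5 * OPT 1 Q * cost_set Q C"
proof -
  define A where "A = cost_set Q C"
  define Opt where "Opt = OPT 1 Q"
  define N where "N = real (card Q)"
  have N: "N > 0" unfolding N_def using Q by (simp add: card_gt_0_iff)
  have A: "A \<ge> 0" unfolding A_def using C by (rule cost_set_nonneg)
  have per_centre: "cost_pt c C * cost_set Q (insert c C)
      \<le> cost_pt c C * Opt + 4 * A / N * (cost_set Q {c} - Opt)" for c
  proof (rule D2_weighted_cost_arith[OF N cost_pt_nonneg[OF C] A])
    have "N * cost_pt c C = (\<Sum>y\<in>Q. cost_pt c C)" unfolding N_def by simp
    also have "\<dots> \<le> (\<Sum>y\<in>Q. 2 * cost_pt y C + 2 * (norm (y - c))\<^sup>2)"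
      by (intro sum_mono cost_pt_le_relaxed_triangle[OF C])
    also have "\<dots> = 2 * A + 2 * cost_set Q {c}"
      unfolding A_def cost_set_singleton by (simp add: sum.distrib sum_distrib_left cost_set_def)
    finally show "N * cost_pt c C \<le> 2 * A + 2 * cost_set Q {c}" .
    show "Opt \<ge> 0" "Opt \<le> cost_set Q {c}"
      unfolding Opt_def by (rule OPT1_nonneg, rule OPT1_le_cost_set_singleton)
    show "cost_set Q (insert c C) \<le> A" "cost_set Q (insert c C) \<le> cost_set Q {c}"
      unfolding A_def using C by (auto intro: cost_set_antimono)
  qed
  have "(\<Sum>c\<in>Q. cost_pt c C * cost_set Q (insert c C))
      \<le> (\<Sum>c\<in>Q. cost_pt c C * Opt + 4 * A / N * (cost_set Q {c} - Opt))"
    by (intro sum_mono per_centre)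
  also have "\<dots> = A * Opt + 4 * A / N * ((\<Sum>c\<in>Q. cost_set Q {c}) - N * Opt)"
  proof -
    have "(\<Sum>c\<in>Q. cost_pt c C * Opt) = A * Opt"
      by (simp add: A_def cost_set_def sum_distrib_right)
    moreover have "(\<Sum>c\<in>Q. 4 * A / N * (cost_set Q {c} - Opt))
        = 4 * A / N * ((\<Sum>c\<in>Q. cost_set Q {c}) - N * Opt)"
      by (simp only: sum_distrib_left[symmetric] sum_subtractf) (simp add: N_def)
    ultimately show ?thesis by (simp only: sum.distrib)
  qed
  also have "\<dots> \<le> A * Opt + 4 * A / N * (2 * N * Opt - N * Opt)"
    using sum_cost_set_singleton_le_2_OPT1[OF Q] A N
    by (intro add_left_mono mult_left_mono) (auto simp: N_def Opt_def)
  also have "\<dots> = 5 * Opt * A" using N by (simp add: field_simps)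
  finally show ?thesis unfolding Opt_def A_def .
qed

section \<open>The concave envelope psi\<close>

text \<open>psi n is the least concave majorant of (x/(1+x))^n on [0,\<infinity>): the tangent through the
  origin, which touches the curve at n - 1, followed by the curve itself.\<close>

definition psi_slope :: "nat \<Rightarrow> real" where
  "psi_slope n = real (n - 1) ^ (n - 1) / real n ^ n"

definition psi :: "nat \<Rightarrow> real \<Rightarrow> real" where
  "psi n x = (if x \<le> real n - 1 then psi_slope n * x else (x / (1 + x)) ^ n)"

definition psi_tail_deriv :: "nat \<Rightarrow> real \<Rightarrow> real" where
  "psi_tail_deriv n x = real n * x ^ (n - 1) / (1 + x) ^ (n + 1)"

definition psi_deriv :: "nat \<Rightarrow> real \<Rightarrow> real" where
  "psi_deriv n x = (if x \<le> real n - 1 then psi_slope n else psi_tail_deriv n x)"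

lemma psi_slope_pos: "n \<ge> 1 \<Longrightarrow> psi_slope n > 0"
  unfolding psi_slope_def by (cases "n = 1") auto

text \<open>x^j/(1+x)^(j+1) is maximal at x = j; the proof is Bernoulli's inequality applied to the
  ratio of b = (1+x)/(j+1) and a = x/j, using (j+1) b - j a = 1.\<close>
lemma power_div_power_Suc_le_psi_slope:
  fixes x :: real
  assumes "0 \<le> x"
  shows "x ^ j / (1 + x) ^ Suc j \<le> psi_slope (Suc j)"
proof (cases "j = 0 \<or> x = 0")
  case True
  then show ?thesis using assms by (cases "j = 0") (auto simp: psi_slope_def power_0_left)
next
  case False
  then have x: "x > 0" and j: "real j > 0" using assms by auto
  define a where "a = x / real j"
  define b where "b = (1 + x) / real (Suc j)"
  have ab: "a > 0" "b > 0" using x j by (simp_all add: a_def b_def)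
  have "real (Suc j) * b - real j * a = 1"
    using j by (simp add: a_def b_def)
  then have "1 / a = 1 + real (Suc j) * (b / a - 1)"
    using ab by (simp add: field_simps)
  also have "\<dots> \<le> (1 + (b / a - 1)) ^ Suc j"
    by (rule Bernoulli_inequality) (use ab in simp)
  also have "\<dots> = b ^ Suc j / (a ^ j * a)"
    by (simp add: power_divide)
  finally have "a ^ j \<le> b ^ Suc j"
    using ab by (simp add: field_simps)
  then have "x ^ j * real (Suc j) ^ Suc j \<le> real j ^ j * (1 + x) ^ Suc j"
    using j by (simp add: a_def b_def field_simps del: of_nat_Suc)
  moreover have "(1 + x) ^ Suc j > 0" "real (Suc j) ^ Suc j > 0"
    using x by simp_all
  ultimately show ?thesis
    unfolding psi_slope_def by (simp add: pos_divide_le_eq pos_le_divide_eq mult.commute del: of_nat_Suc)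
qed

lemma psi_slope_at_junction:
  "n \<ge> 1 \<Longrightarrow> psi_slope n * (real n - 1) = ((real n - 1) / (1 + (real n - 1))) ^ n"
  unfolding psi_slope_def
  by (cases n) (simp_all add: power_divide)

lemma tail_le_psi_slope_Suc:
  fixes x :: real
  assumes "0 \<le> x"
  shows "(x / (1 + x)) ^ n \<le> psi_slope (Suc n) * (1 + x)"
proof -
  have "(x / (1 + x)) ^ n = x ^ n / (1 + x) ^ Suc n * (1 + x)"
    using assms by (simp add: power_divide)
  also have "\<dots> \<le> psi_slope (Suc n) * (1 + x)"
    using assms by (intro mult_right_mono power_div_power_Suc_le_psi_slope) auto
  finally show ?thesis .
qed

lemma psi_nonneg: "n \<ge> 1 \<Longrightarrow> 0 \<le> x \<Longrightarrow> 0 \<le> psi n x"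
  unfolding psi_def using psi_slope_pos[of n] by auto

lemma psi_le_slope:
  assumes "n \<ge> 1" "0 \<le> x"
  shows "psi n x \<le> psi_slope n * x"
proof (cases "x \<le> real n - 1")
  case False
  obtain j where n: "n = Suc j" using assms(1) by (cases n) auto
  have "(x / (1 + x)) ^ n = x * (x ^ j / (1 + x) ^ Suc j)"
    by (simp add: n power_divide)
  also have "\<dots> \<le> x * psi_slope n"
    unfolding n using assms(2) by (intro mult_left_mono power_div_power_Suc_le_psi_slope)
  finally show ?thesis using False by (simp add: psi_def mult.commute)
qed (simp add: psi_def)

lemma frac_one_plus_mono: "0 \<le> a \<Longrightarrow> a \<le> b \<Longrightarrow> a / (1 + a) \<le> b / (1 + (b::real))"
  by (simp add: divide_le_eq le_divide_eq field_simps)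

lemma psi_mono:
  assumes n: "n \<ge> 1" and "0 \<le> x" "x \<le> y"
  shows "psi n x \<le> psi n y"
proof -
  have slope: "psi_slope n > 0" using psi_slope_pos[OF n] .
  consider "y \<le> real n - 1" | "x > real n - 1" | "x \<le> real n - 1" "y > real n - 1"
    by linarith
  then show ?thesis
  proof cases
    case 1
    then show ?thesis using assms slope by (simp add: psi_def mult_left_mono)
  next
    case 2
    then show ?thesis using assms by (simp add: psi_def power_mono frac_one_plus_mono)
  next
    case 3
    have "psi n x = psi_slope n * x" using 3 by (simp add: psi_def)
    also have "\<dots> \<le> psi_slope n * (real n - 1)" using 3 slope by (simp add: mult_left_mono)
    also have "\<dots> = ((real n - 1) / (1 + (real n - 1))) ^ n" by (rule psi_slope_at_junction[OF n])
    also have "\<dots> \<le> (y / (1 + y)) ^ n"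
      using 3 n by (intro power_mono frac_one_plus_mono) simp_all
    also have "\<dots> = psi n y" using 3 by (simp add: psi_def)
    finally show ?thesis .
  qed
qed

lemma linear_le_affine_from_endpoint:
  fixes a b c x :: real
  assumes "a * c \<le> b * (c + 1)" "0 \<le> x" "x \<le> c" "0 \<le> a" "0 \<le> b"
  shows "a * x \<le> b * (1 + x)"
proof (cases "c = 0")
  case False
  then have c: "c > 0" using assms by simp
  have "c * (a * x) = a * c * x" by simp
  also have "\<dots> \<le> b * (c + 1) * x" using assms by (intro mult_right_mono) auto
  also have "\<dots> = b * c * x + b * x" by (simp add: algebra_simps)
  also have "\<dots> \<le> b * c * x + b * c" using assms by (simp add: mult_left_mono)
  also have "\<dots> = c * (b * (1 + x))" by (simp add: algebra_simps)
  finally show ?thesis using c by (simp add: mult_le_cancel_left_pos)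
qed (use assms in simp)

lemma psi_Suc_rec:
  assumes n: "n \<ge> 1" and x: "0 \<le> x"
  shows "x * psi n x \<le> psi (Suc n) x * (1 + x)"
proof (cases "x > real n")
  case True
  then have "psi (Suc n) x * (1 + x) = (x / (1 + x)) ^ n * x"
    using x by (simp add: psi_def)
  then show ?thesis using True by (simp add: psi_def)
next
  case False
  have "psi n x \<le> psi_slope (Suc n) * (1 + x)"
  proof (cases "x \<le> real n - 1")
    case True
    have "psi_slope n * (real n - 1) \<le> psi_slope (Suc n) * ((real n - 1) + 1)"
      using tail_le_psi_slope_Suc[of "real n - 1" n] psi_slope_at_junction[OF n] n
      by (simp add: add.commute)
    then have "psi_slope n * x \<le> psi_slope (Suc n) * (1 + x)"
      using True x psi_slope_pos[OF n] psi_slope_pos[of "Suc n"]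
      by (intro linear_le_affine_from_endpoint) auto
    then show ?thesis using True by (simp add: psi_def)
  qed (use tail_le_psi_slope_Suc[OF x, of n] in \<open>simp add: psi_def\<close>)
  then have "x * psi n x \<le> x * (psi_slope (Suc n) * (1 + x))"
    using x by (rule mult_left_mono)
  then show ?thesis using False by (simp add: psi_def algebra_simps)
qed

lemma psi_1_rec: "0 \<le> x \<Longrightarrow> x \<le> psi 1 x * (1 + x)"
  by (cases "x = 0") (auto simp: psi_def psi_slope_def)

text \<open>Equivalent to (1 - 1/n)^n \<le> exp (-1), the n-th power of 1 + y \<le> exp y at y = -1/n.\<close>
lemma psi_slope_le_inverse_e:
  assumes "n \<ge> 2"
  shows "psi_slope n * (exp 1 * (real n - 1)) \<le> 1"
proof -
  have n: "real n > 0" using assms by simp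
  have "1 + (- 1 / real n) \<le> exp (- 1 / real n)"
    by (rule exp_ge_add_one_self)
  then have "(1 - 1 / real n) ^ n \<le> exp (- 1 / real n) ^ n"
    using assms by (intro power_mono) (simp_all add: field_simps)
  also have "\<dots> = exp (- 1)"
    using n by (simp add: exp_of_nat_mult[symmetric])
  finally have bound: "(1 - 1 / real n) ^ n \<le> exp (- 1)" .
  obtain j where j: "n = Suc j" using assms by (cases n) auto
  have "psi_slope n * (real n - 1) = (1 - 1 / real n) ^ n"
    using n by (simp add: psi_slope_def j field_simps)
  then have "psi_slope n * (exp 1 * (real n - 1)) = exp 1 * (1 - 1 / real n) ^ n"
    by (simp add: mult_ac)
  also have "\<dots> \<le> exp 1 * exp (- 1)"
    using bound by (intro mult_left_mono) auto
  finally show ?thesis by (simp add: exp_minus)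
qed

lemma has_real_derivative_tail:
  assumes "x > -1"
  shows "((\<lambda>x. (x / (1 + x)) ^ n) has_real_derivative psi_tail_deriv n x) (at x)"
proof -
  have nz: "1 + x \<noteq> 0" using assms by simp
  have "((\<lambda>x. (x / (1 + x)) ^ n) has_real_derivative
      real n * (x / (1 + x)) ^ (n - 1) * ((1 * (1 + x) - x * 1) / ((1 + x) * (1 + x)))) (at x)"
    using nz by (intro derivative_eq_intros refl) auto
  moreover have "real n * (x / (1 + x)) ^ (n - 1) * ((1 * (1 + x) - x * 1) / ((1 + x) * (1 + x)))
      = psi_tail_deriv n x"
    using nz by (cases n) (simp_all add: psi_tail_deriv_def field_simps)
  ultimately show ?thesis by simp
qed

lemma psi_tail_deriv_at_junction: "n \<ge> 1 \<Longrightarrow> psi_tail_deriv n (real n - 1) = psi_slope n"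
  by (cases n) (simp_all add: psi_tail_deriv_def psi_slope_def)

lemma psi_tail_deriv_antimono:
  assumes "real n - 1 \<le> 2 * x" "0 \<le> x" "x \<le> y"
  shows "psi_tail_deriv n y \<le> psi_tail_deriv n x"
proof -
  define h where "h z = z ^ (n - 1) / (1 + z) ^ (n + 1)" for z :: real
  have "h y \<le> h x"
  proof (rule DERIV_nonpos_imp_nonincreasing[OF assms(3)])
    fix z assume z: "x \<le> z" "z \<le> y"
    then have z0: "z \<ge> 0" using assms by simp
    define num where "num = real (n - 1) * z ^ (n - 1 - 1) * (1 + z) ^ (n + 1)
        - z ^ (n - 1) * (real (n + 1) * (1 + z) ^ n)"
    have "(h has_real_derivative num / ((1 + z) ^ (n + 1) * (1 + z) ^ (n + 1))) (at z)"
      unfolding h_def num_def using z0 by (intro derivative_eq_intros refl) auto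
    moreover have "num \<le> 0"
    proof (cases "n \<le> 1")
      case True
      then show ?thesis using z0 by (auto simp: num_def le_Suc_eq)
    next
      case False
      then obtain m where m: "n = m + 2" by (metis add.commute le_add_diff_inverse not_less_eq_eq one_add_one plus_1_eq_Suc)
      have "num = z ^ m * (1 + z) ^ (m + 2) * (real m + 1 - 2 * z)"
        unfolding num_def m by (simp add: algebra_simps)
      moreover have "real m + 1 - 2 * z \<le> 0" using assms(1) z m by simp
      ultimately show ?thesis using z0 by (simp add: mult_nonneg_nonpos)
    qed
    moreover have "0 \<le> (1 + z) ^ (n + 1) * (1 + z) ^ (n + 1)" using z0 by simp
    ultimately show "\<exists>D. (h has_real_derivative D) (at z) \<and> D \<le> 0"
      by (blast intro: divide_nonpos_nonneg)
  qed
  then have "real n * h y \<le> real n * h x" by (simp add: mult_left_mono)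
  then show ?thesis unfolding psi_tail_deriv_def h_def by simp
qed

lemma psi_has_real_derivative:
  assumes n: "n \<ge> 1"
  shows "(psi n has_real_derivative psi_deriv n x) (at x)"
proof -
  define S where "S = {..real n - 1}"
  define T where "T = {real n - 1<..}"
  have ST: "S \<union> T = UNIV" unfolding S_def T_def by auto
  have junction: "closure S \<inter> closure T = {real n - 1}" unfolding S_def T_def by auto
  have psi_eq: "psi n = (\<lambda>x. if x \<in> S then psi_slope n * x else (x / (1 + x)) ^ n)"
    unfolding S_def psi_def by (auto simp: fun_eq_iff)
  have "((\<lambda>x. if x \<in> S then psi_slope n * x else (x / (1 + x)) ^ n) has_derivative
      (if x \<in> S then (\<lambda>h. psi_slope n * h) else (\<lambda>h. psi_tail_deriv n x * h))) (at x within (S \<union> T))"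
  proof (rule has_derivative_If_within_closures
      [where f' = "\<lambda>x h. psi_slope n * h" and g' = "\<lambda>x h. psi_tail_deriv n x * h"])
    show "((\<lambda>x. psi_slope n * x) has_derivative (\<lambda>h. psi_slope n * h))
        (at x within S \<union> (closure S \<inter> closure T))"
      by (intro derivative_eq_intros) auto
  next
    assume "x \<in> T \<union> (closure S \<inter> closure T)"
    then have "x > -1" using n unfolding junction T_def by auto
    then show "((\<lambda>x. (x / (1 + x)) ^ n) has_derivative (\<lambda>h. psi_tail_deriv n x * h))
        (at x within T \<union> (closure S \<inter> closure T))"
      using has_real_derivative_tail[of x n]
      unfolding has_field_derivative_def by (blast intro: has_derivative_at_withinI)
  next
    assume "x \<in> closure S" "x \<in> closure T"
    then have "x = real n - 1" using junction by auto
    then show "psi_slope n * x = (x / (1 + x)) ^ n"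
      and "(\<lambda>h. psi_slope n * h) = (\<lambda>h. psi_tail_deriv n x * h)"
      using psi_slope_at_junction[OF n] psi_tail_deriv_at_junction[OF n] by simp_all
  qed (use ST in simp)
  then have "(psi n has_derivative (\<lambda>h. psi_deriv n x * h)) (at x)"
    unfolding psi_eq ST by (simp add: psi_deriv_def S_def if_distrib cong: if_cong)
  then show ?thesis unfolding has_field_derivative_def by simp
qed

lemma psi_deriv_antimono:
  assumes n: "n \<ge> 1" and "x \<le> y"
  shows "psi_deriv n y \<le> psi_deriv n x"
proof -
  consider "y \<le> real n - 1" | "x > real n - 1" | "x \<le> real n - 1" "y > real n - 1"
    by linarith
  then show ?thesis
  proof cases
    case 2
    then show ?thesis using assms by (simp add: psi_deriv_def psi_tail_deriv_antimono)
  next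
    case 3
    have "psi_tail_deriv n y \<le> psi_tail_deriv n (real n - 1)"
      using 3 n by (intro psi_tail_deriv_antimono) auto
    then show ?thesis using 3 psi_tail_deriv_at_junction[OF n] by (simp add: psi_deriv_def)
  qed (use assms in \<open>simp add: psi_deriv_def\<close>)
qed

lemma psi_concave: "n \<ge> 1 \<Longrightarrow> concave_on {0..} (psi n)"
  unfolding concave_on_def
  by (rule convex_on_realI[where f' = "\<lambda>x. - psi_deriv n x"])
     (auto intro!: DERIV_minus psi_has_real_derivative psi_deriv_antimono)

section \<open>The potential\<close>

text \<open>For m < 0 the potential is just V: then the trivial bound suffices.\<close>
definition Phi :: "int \<Rightarrow> real \<Rightarrow> real" where
  "Phi m y = (if m < 0 then 1 else psi (nat m + 1) y)"

definition potential :: "int \<Rightarrow> real \<Rightarrow> real \<Rightarrow> real" where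
  "potential m H V = V * Phi m (H / V)"

lemma Phi_nonneg: "0 \<le> y \<Longrightarrow> 0 \<le> Phi m y"
  unfolding Phi_def by (auto intro: psi_nonneg)

lemma Phi_mono: "0 \<le> x \<Longrightarrow> x \<le> y \<Longrightarrow> Phi m x \<le> Phi m y"
  unfolding Phi_def by (auto intro: psi_mono)

lemma Phi_concave: "concave_on {0..} (Phi m)"
proof (cases "m < 0")
  case True
  then have "Phi m = (\<lambda>x. 1)" by (auto simp: Phi_def fun_eq_iff)
  then show ?thesis by (simp add: concave_on_const)
next
  case False
  then have "Phi m = psi (nat m + 1)" by (auto simp: Phi_def fun_eq_iff)
  then show ?thesis using psi_concave[of "nat m + 1"] by simp
qed

lemma Phi_rec: "0 \<le> y \<Longrightarrow> y * Phi (m - 1) y \<le> Phi m y * (1 + y)"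
proof -
  assume y: "0 \<le> y"
  consider "m < 0" | "m = 0" | "m \<ge> 1" by linarith
  then show ?thesis
  proof cases
    case 3
    then have "Phi (m - 1) y = psi (nat m) y" "Phi m y = psi (Suc (nat m)) y"
      by (simp_all add: Phi_def nat_diff_distrib)
    then show ?thesis using 3 y by (simp add: psi_Suc_rec)
  qed (use y psi_1_rec[OF y] in \<open>simp_all add: Phi_def\<close>)
qed

lemma Phi_le_linear:
  assumes m: "m \<ge> 2" and y: "0 \<le> y"
  shows "Phi m y \<le> y / (exp 1 * (real_of_int m - 1))"
proof -
  define n where "n = nat m + 1"
  have n: "n \<ge> 2" "real n - 1 = real_of_int m" unfolding n_def using m by simp_all
  have "Phi m y = psi n y" unfolding Phi_def n_def using m by simp
  also have "\<dots> \<le> psi_slope n * y" using n y by (intro psi_le_slope) auto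
  also have "\<dots> \<le> y / (exp 1 * (real_of_int m - 1))"
  proof -
    have "psi_slope n * (exp 1 * (real_of_int m - 1)) \<le> psi_slope n * (exp 1 * real_of_int m)"
      using psi_slope_pos[of n] n by (intro mult_left_mono) auto
    also have "\<dots> \<le> 1" using psi_slope_le_inverse_e[OF n(1)] unfolding n(2) .
    finally have "y * (psi_slope n * (exp 1 * (real_of_int m - 1))) \<le> y"
      using y by (rule mult_left_le)
    then show ?thesis using m by (simp add: le_divide_eq mult_ac)
  qed
  finally show ?thesis .
qed

lemma potential_nonneg: "0 \<le> V \<Longrightarrow> 0 \<le> H \<Longrightarrow> 0 \<le> potential m H V"
  unfolding potential_def by (intro mult_nonneg_nonneg Phi_nonneg) auto

text \<open>V \<mapsto> V Phi(H/V) is the perspective of a concave function that is nonnegative at 0,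
  hence monotone.\<close>
lemma potential_mono:
  assumes "0 \<le> V'" "V' \<le> V" "0 \<le> H"
  shows "potential m H V' \<le> potential m H V"
proof (cases "V' = 0")
  case True
  then show ?thesis using potential_nonneg[of V H m] assms by (simp add: potential_def)
next
  case False
  then have V': "V' > 0" and V: "V > 0" using assms by auto
  define t where "t = V' / V"
  have t: "0 \<le> t" "t \<le> 1" unfolding t_def using V' V assms by auto
  have concave: "u * Phi m x + v * Phi m y \<le> Phi m (u * x + v * y)"
    if "x \<ge> 0" "y \<ge> 0" "u \<ge> 0" "v \<ge> 0" "u + v = 1" for x y u v
    using Phi_concave[of m] that unfolding concave_on_iff by auto
  have "t * Phi m (H / V') + (1 - t) * Phi m 0 \<le> Phi m (t * (H / V') + (1 - t) * 0)"
    by (rule concave) (use t assms V' in auto)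
  also have "t * (H / V') + (1 - t) * 0 = H / V" unfolding t_def using V' by simp
  finally have "t * Phi m (H / V') + (1 - t) * Phi m 0 \<le> Phi m (H / V)" .
  moreover have "0 \<le> (1 - t) * Phi m 0" using t Phi_nonneg[of 0 m] by simp
  ultimately have "t * Phi m (H / V') \<le> Phi m (H / V)" by linarith
  then have "V * (t * Phi m (H / V')) \<le> V * Phi m (H / V)" using V by simp
  then show ?thesis unfolding potential_def t_def using V by simp
qed

lemma potential_le:
  assumes "m \<ge> 2" "0 \<le> V" "0 \<le> H"
  shows "potential m H V \<le> H / (exp 1 * (real_of_int m - 1))"
proof (cases "V = 0")
  case False
  then have V: "V > 0" using assms by simp
  have "V * Phi m (H / V) \<le> V * (H / V / (exp 1 * (real_of_int m - 1)))"
    using assms V by (intro mult_left_mono Phi_le_linear) auto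
  then show ?thesis unfolding potential_def using V by simp
qed (use assms in \<open>simp add: potential_def\<close>)

lemma potential_rec:
  assumes V: "V > 0" and "0 \<le> H" "0 \<le> D" "D \<le> H"
  shows "D * (potential (m - 1) H V - potential m H V) \<le> V * potential m H V"
proof -
  have "H * potential (m - 1) H V = V * V * ((H / V) * Phi (m - 1) (H / V))"
    unfolding potential_def using V by simp
  also have "\<dots> \<le> V * V * (Phi m (H / V) * (1 + H / V))"
    using assms by (intro mult_left_mono Phi_rec) auto
  also have "\<dots> = potential m H V * (V + H)"
    unfolding potential_def using V by (simp add: field_simps)
  finally have rec: "H * potential (m - 1) H V \<le> potential m H V * (V + H)" .
  show ?thesis
  proof (cases "potential (m - 1) H V \<le> potential m H V")
    case True
    then have "D * (potential (m - 1) H V - potential m H V) \<le> 0"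
      using assms by (simp add: mult_nonneg_nonpos)
    moreover have "0 \<le> V * potential m H V" using assms potential_nonneg[of V H m] by simp
    ultimately show ?thesis by linarith
  next
    case False
    then have "D * (potential (m - 1) H V - potential m H V)
        \<le> H * (potential (m - 1) H V - potential m H V)"
      using assms by (intro mult_right_mono) auto
    also have "\<dots> \<le> V * potential m H V" using rec by (simp add: algebra_simps)
    finally show ?thesis .
  qed
qed

lemma potential_eq_V_if_neg: "m < 0 \<Longrightarrow> potential m H V = V"
  by (simp add: potential_def Phi_def)

text \<open>Jensen's inequality for the concave Phi m, with the D^2 weights, combined with the
  5-approximation for the centre sampled from Q.\<close>
lemma sum_D2_weighted_potential_le:
  fixes Q C :: "'a::euclidean_space set"
  assumes Q: "finite Q" "Q \<noteq> {}" and C: "finite C" "C \<noteq> {}" and disj: "Q \<inter> C = {}"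
    and V: "V > 0"
    and H: "\<And>x. x \<in> Q \<Longrightarrow> 0 \<le> H - 5 * OPT 1 Q + cost_set Q (insert x C)"
  shows "(\<Sum>x\<in>Q. cost_pt x C * potential m (H - 5 * OPT 1 Q + cost_set Q (insert x C)) V)
      \<le> cost_set Q C * potential m H V"
proof -
  define A where "A = cost_set Q C"
  define y where "y x = (H - 5 * OPT 1 Q + cost_set Q (insert x C)) / V" for x
  define w where "w x = cost_pt x C / A" for x
  have pos: "cost_pt x C > 0" if "x \<in> Q" for x
    using that disj cost_pt_nonneg[OF C, of x] cost_pt_eq_0_iff[OF C, of x] by auto
  then have A: "A > 0" unfolding A_def cost_set_def using Q by (intro sum_pos) auto
  have w: "(\<Sum>x\<in>Q. w x) = 1" "\<And>x. x \<in> Q \<Longrightarrow> w x \<ge> 0"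
    unfolding w_def using A pos by (auto simp: sum_divide_distrib[symmetric] A_def cost_set_def less_imp_le)
  have y: "y x \<in> {0..}" if "x \<in> Q" for x
    unfolding y_def using H[OF that] V by simp
  have "(\<Sum>x\<in>Q. w x *\<^sub>R y x) = (H - 5 * OPT 1 Q) / V + (\<Sum>x\<in>Q. cost_pt x C * cost_set Q (insert x C)) / (A * V)"
  proof -
    have "(\<Sum>x\<in>Q. w x *\<^sub>R y x)
        = (\<Sum>x\<in>Q. (H - 5 * OPT 1 Q) / V * w x + cost_pt x C * cost_set Q (insert x C) / (A * V))"
      unfolding w_def y_def using A V by (intro sum.cong refl) (simp add: field_simps)
    then show ?thesis
      using w(1) by (simp add: sum.distrib sum_distrib_left[symmetric] sum_divide_distrib[symmetric])
  qed
  also have "\<dots> \<le> (H - 5 * OPT 1 Q) / V + 5 * OPT 1 Q * A / (A * V)"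
    using sum_D2_weighted_cost_le_5_OPT1[OF Q C] A V
    by (intro add_left_mono divide_right_mono) (auto simp: A_def)
  also have "\<dots> = H / V" using A by (simp add: diff_divide_distrib)
  finally have mean: "(\<Sum>x\<in>Q. w x *\<^sub>R y x) \<le> H / V" .
  have "(\<Sum>x\<in>Q. w x * Phi m (y x)) \<le> Phi m (\<Sum>x\<in>Q. w x *\<^sub>R y x)"
    by (rule concave_on_sum[OF Q Phi_concave w y])
  also have "\<dots> \<le> Phi m (H / V)"
    using mean w(2) y by (intro Phi_mono sum_nonneg) auto
  finally have jensen: "(\<Sum>x\<in>Q. w x * Phi m (y x)) \<le> Phi m (H / V)" .
  have "(\<Sum>x\<in>Q. cost_pt x C * potential m (H - 5 * OPT 1 Q + cost_set Q (insert x C)) V)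
      = A * V * (\<Sum>x\<in>Q. w x * Phi m (y x))"
    unfolding sum_distrib_left potential_def w_def y_def using A by (intro sum.cong refl) simp
  also have "\<dots> \<le> A * V * Phi m (H / V)"
    using jensen A V by (intro mult_left_mono) auto
  finally show ?thesis unfolding potential_def A_def by (simp add: mult_ac)
qed

section \<open>The seeding process\<close>

lemma pmf_d2_pmf:
  assumes "finite X" "finite C" "C \<noteq> {}" "cost_set X C > 0"
  shows "pmf (d2_pmf X C) x = (if x \<in> X then cost_pt x C / cost_set X C else 0)"
  unfolding d2_pmf_def
proof (rule pmf_embed_pmf)
  show "0 \<le> (if x \<in> X then cost_pt x C / cost_set X C else 0)" for x
    using cost_pt_nonneg[OF assms(2,3)] assms(4) by auto
  have "(\<integral>\<^sup>+x. ennreal (if x \<in> X then cost_pt x C / cost_set X C else 0) \<partial>count_space UNIV)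
      = (\<Sum>x\<in>X. ennreal (cost_pt x C / cost_set X C))"
    using assms(1) by (subst nn_integral_count_space') auto
  also have "\<dots> = ennreal (\<Sum>x\<in>X. cost_pt x C / cost_set X C)"
    using cost_pt_nonneg[OF assms(2,3)] assms(4) by (intro sum_ennreal) auto
  also have "(\<Sum>x\<in>X. cost_pt x C / cost_set X C) = 1"
    using assms(4) by (simp add: sum_divide_distrib[symmetric] cost_set_def)
  finally show "(\<integral>\<^sup>+x. ennreal (if x \<in> X then cost_pt x C / cost_set X C else 0) \<partial>count_space UNIV) = 1"
    by simp
qed

lemma set_pmf_d2_pmf:
  "finite X \<Longrightarrow> finite C \<Longrightarrow> C \<noteq> {} \<Longrightarrow> cost_set X C > 0 \<Longrightarrow> set_pmf (d2_pmf X C) \<subseteq> X"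
  by (auto simp: set_pmf_eq pmf_d2_pmf split: if_splits)

lemma set_pmf_kpp_step:
  assumes "finite X" "X \<noteq> {}"
  shows "set_pmf (kpp_step X cs) \<subseteq> (\<lambda>x. cs @ [x]) ` X"
proof (cases "cs = [] \<or> cost_set X (set cs) = 0")
  case False
  then have "cost_set X (set cs) > 0"
    using cost_set_nonneg[of "set cs" X] by (simp add: order_less_le)
  then have "set_pmf (d2_pmf X (set cs)) \<subseteq> X"
    using False assms by (intro set_pmf_d2_pmf) auto
  then show ?thesis using False by (auto simp: kpp_step_def)
qed (use assms in \<open>auto simp: kpp_step_def\<close>)

lemma set_pmf_kpp_run:
  assumes "finite X" "X \<noteq> {}" "ds \<in> set_pmf (kpp_run X n cs)"
  shows "\<exists>ys. ds = cs @ ys \<and> length ys = n \<and> set ys \<subseteq> X"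
  using assms(3)
proof (induction n arbitrary: ds)
  case (Suc n)
  then obtain ds' where ds': "ds' \<in> set_pmf (kpp_run X n cs)" "ds \<in> set_pmf (kpp_step X ds')"
    by auto
  obtain ys where "ds' = cs @ ys" "length ys = n" "set ys \<subseteq> X"
    using Suc.IH[OF ds'(1)] by blast
  moreover obtain x where "x \<in> X" "ds = ds' @ [x]"
    using set_pmf_kpp_step[OF assms(1,2)] ds'(2) by blast
  ultimately show ?case by (intro exI[of _ "ys @ [x]"]) auto
qed simp

lemma finite_set_pmf_kpp_run:
  assumes "finite X" "X \<noteq> {}"
  shows "finite (set_pmf (kpp_run X n cs))"
proof (rule finite_subset)
  show "set_pmf (kpp_run X n cs) \<subseteq> (\<lambda>ys. cs @ ys) ` {ys. set ys \<subseteq> X \<and> length ys = n}"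
    using set_pmf_kpp_run[OF assms] by blast
qed (use finite_lists_length_eq[OF assms(1)] in simp)

lemma kpp_run_Suc': "kpp_run X (Suc n) cs = kpp_step X cs \<bind> kpp_run X n"
proof (induction n)
  case (Suc n)
  have "kpp_run X (Suc (Suc n)) cs = kpp_run X (Suc n) cs \<bind> kpp_step X"
    by (rule kpp_run.simps(2))
  also have "\<dots> = (kpp_step X cs \<bind> kpp_run X n) \<bind> kpp_step X"
    by (simp only: Suc)
  also have "\<dots> = kpp_step X cs \<bind> (\<lambda>c. kpp_run X n c \<bind> kpp_step X)"
    by (rule bind_assoc_pmf)
  also have "(\<lambda>c. kpp_run X n c \<bind> kpp_step X) = kpp_run X (Suc n)"
    by (rule ext) simp
  finally show ?case .
qed (simp add: bind_return_pmf bind_return_pmf')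

lemma expectation_kpp_run_Suc:
  fixes f :: "'a::euclidean_space list \<Rightarrow> real"
  assumes X: "finite X" "X \<noteq> {}" and "cs \<noteq> []" and T: "cost_set X (set cs) > 0"
  shows "measure_pmf.expectation (kpp_run X (Suc n) cs) f =
    (\<Sum>x\<in>X. cost_pt x (set cs) / cost_set X (set cs) * measure_pmf.expectation (kpp_run X n (cs @ [x])) f)"
proof -
  have "kpp_step X cs = map_pmf (\<lambda>x. cs @ [x]) (d2_pmf X (set cs))"
    using assms by (simp add: kpp_step_def)
  then have run: "kpp_run X (Suc n) cs = d2_pmf X (set cs) \<bind> (\<lambda>x. kpp_run X n (cs @ [x]))"
    unfolding kpp_run_Suc' by (simp add: bind_map_pmf del: kpp_run.simps)
  have pmf: "pmf (d2_pmf X (set cs)) x = cost_pt x (set cs) / cost_set X (set cs)" if "x \<in> X" for x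
    using that assms(3) by (simp add: pmf_d2_pmf[OF X(1) _ _ T])
  have "measure_pmf.expectation (kpp_run X (Suc n) cs) f
      = (\<Sum>x\<in>X. pmf (d2_pmf X (set cs)) x *\<^sub>R measure_pmf.expectation (kpp_run X n (cs @ [x])) f)"
    unfolding run
  proof (rule pmf_expectation_bind)
    show "set_pmf (d2_pmf X (set cs)) \<subseteq> X"
      using assms(3) by (intro set_pmf_d2_pmf[OF X(1) _ _ T]) auto
  qed (use X finite_set_pmf_kpp_run in auto)
  also have "\<dots> = (\<Sum>x\<in>X. cost_pt x (set cs) / cost_set X (set cs)
      * measure_pmf.expectation (kpp_run X n (cs @ [x])) f)"
    by (rule sum.cong) (simp_all add: pmf)
  finally show ?thesis .
qed

section \<open>Covering, misses and H-tilde\<close>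

lemma U_nonneg: "finite C \<Longrightarrow> C \<noteq> {} \<Longrightarrow> 0 \<le> U Q C"
  unfolding U_def by (auto intro: cost_set_nonneg)

lemma U_eq_0_mono:
  assumes "finite Q" "finite D" "C \<subseteq> D" "C \<noteq> {}" "U Q C = 0"
  shows "U Q D = 0"
proof (cases "Q \<inter> C = {}")
  case True
  have C: "finite C" using assms finite_subset by blast
  have "cost_set Q C = 0" using True assms(5) by (simp add: U_def)
  then have "\<forall>x\<in>Q. cost_pt x C = 0"
    unfolding cost_set_def using assms(1) cost_pt_nonneg[OF C assms(4)] by (simp add: sum_nonneg_eq_0_iff)
  then have "Q = {}" using True cost_pt_eq_0_iff[OF C assms(4)] by blast
  then show ?thesis by (simp add: U_def cost_set_def)
qed (use assms in \<open>auto simp: U_def\<close>)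

lemma U_pos_imp_uncovered: "0 < U Q C \<Longrightarrow> Q \<inter> C = {}"
  by (auto simp: U_def split: if_splits)

lemma U_snoc_le: "cs \<noteq> [] \<Longrightarrow> U Q (set (cs @ [x])) \<le> U Q (set cs)"
  unfolding U_def by (auto intro: cost_set_antimono cost_set_nonneg)

lemma Least_cover_le:
  "Q \<inter> set cs \<noteq> {} \<Longrightarrow> (LEAST s. Q \<inter> set (take s cs) \<noteq> {}) \<le> length cs"
  by (rule Least_le) simp

lemma Least_cover_snoc:
  assumes "Q \<inter> set cs \<noteq> {}"
  shows "(LEAST s. Q \<inter> set (take s (cs @ [x])) \<noteq> {}) = (LEAST s. Q \<inter> set (take s cs) \<noteq> {})"
proof (rule Least_equality)
  let ?p = "\<lambda>s. Q \<inter> set (take s cs) \<noteq> {}"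
  show "Q \<inter> set (take (LEAST s. ?p s) (cs @ [x])) \<noteq> {}"
    using LeastI[of ?p "length cs"] Least_cover_le[OF assms] assms by simp
  fix s assume "Q \<inter> set (take s (cs @ [x])) \<noteq> {}"
  then show "(LEAST s. ?p s) \<le> s"
    using Least_cover_le[OF assms] by (cases "s \<le> length cs") (auto intro: Least_le)
qed

lemma Htilde_cl_snoc_covered:
  assumes "Q \<inter> set cs \<noteq> {}"
  shows "Htilde_cl Q (cs @ [x]) = Htilde_cl Q cs"
  unfolding Htilde_cl_def Least_cover_snoc[OF assms]
  using assms Least_cover_le[OF assms] by simp

lemma Htilde_cl_snoc_outside: "Q \<inter> set cs = {} \<Longrightarrow> x \<notin> Q \<Longrightarrow> Htilde_cl Q (cs @ [x]) = Htilde_cl Q cs"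
  unfolding Htilde_cl_def by auto

lemma Htilde_cl_snoc_new:
  assumes "Q \<inter> set cs = {}" "x \<in> Q"
  shows "Htilde_cl Q (cs @ [x]) = cost_set Q (insert x (set cs))"
proof -
  have "(LEAST s. Q \<inter> set (take s (cs @ [x])) \<noteq> {}) = Suc (length cs)"
  proof (rule Least_equality)
    fix s assume s: "Q \<inter> set (take s (cs @ [x])) \<noteq> {}"
    show "Suc (length cs) \<le> s"
    proof (rule ccontr)
      assume "\<not> Suc (length cs) \<le> s"
      then have "set (take s (cs @ [x])) \<subseteq> set cs" by (simp add: set_take_subset)
      then show False using s assms(1) by blast
    qed
  qed (use assms in auto)
  then show ?thesis using assms unfolding Htilde_cl_def by auto
qed

lemma Htilde_cl_covered:
  assumes "Q \<inter> set cs \<noteq> {}"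
  obtains s where "take s cs \<noteq> []" "Htilde_cl Q cs = cost_set Q (set (take s cs))"
proof -
  let ?p = "\<lambda>s. Q \<inter> set (take s cs) \<noteq> {}"
  have "?p (LEAST s. ?p s)" by (rule LeastI[of ?p "length cs"]) (use assms in simp)
  then have "take (LEAST s. ?p s) cs \<noteq> []" by (metis Int_empty_right empty_set)
  then show ?thesis using that assms unfolding Htilde_cl_def by auto
qed

lemma Htilde_cl_nonneg:
  assumes "cs \<noteq> []"
  shows "0 \<le> Htilde_cl Q cs"
proof (cases "Q \<inter> set cs = {}")
  case True
  then show ?thesis using OPT1_nonneg[of Q] by (simp add: Htilde_cl_def)
next
  case False
  then obtain s where "take s cs \<noteq> []" "Htilde_cl Q cs = cost_set Q (set (take s cs))"
    by (rule Htilde_cl_covered)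
  then show ?thesis by (simp add: cost_set_nonneg)
qed

lemma cost_set_le_Htilde_cl:
  assumes "Q \<inter> set cs \<noteq> {}"
  shows "cost_set Q (set cs) \<le> Htilde_cl Q cs"
proof -
  obtain s where s: "take s cs \<noteq> []" "Htilde_cl Q cs = cost_set Q (set (take s cs))"
    using Htilde_cl_covered[OF assms] by blast
  then show ?thesis
    using cost_set_antimono[of "set cs" "set (take s cs)" Q] by (simp add: set_take_subset)
qed

lemma Htilde_nonneg: "cs \<noteq> [] \<Longrightarrow> 0 \<le> Htilde k P cs"
  unfolding Htilde_def by (intro sum_nonneg Htilde_cl_nonneg)

lemma sum_covered_cost_set_le_Htilde:
  assumes "cs \<noteq> []"
  shows "(\<Sum>j<k. if P j \<inter> set cs \<noteq> {} then cost_set (P j) (set cs) else 0) \<le> Htilde k P cs"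
  unfolding Htilde_def
proof (rule sum_mono)
  fix j
  show "(if P j \<inter> set cs \<noteq> {} then cost_set (P j) (set cs) else 0) \<le> Htilde_cl (P j) cs"
    using cost_set_le_Htilde_cl[of "P j" cs] Htilde_cl_nonneg[OF assms, of "P j"] by simp
qed

lemma misses_snoc:
  "misses k P (cs @ [x]) = misses k P cs + (if \<exists>y\<in>set cs. \<exists>l<k. y \<in> P l \<and> x \<in> P l then 1 else 0)"
proof -
  define miss where "miss ys i \<longleftrightarrow> (\<exists>j'<i. \<exists>l<k. ys ! j' \<in> P l \<and> ys ! i \<in> P l)" for ys i
  define new where "new \<longleftrightarrow> (\<exists>y\<in>set cs. \<exists>l<k. y \<in> P l \<and> x \<in> P l)"
  have misses_eq: "misses k P ys = card {i. i < length ys \<and> miss ys i}" for ys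
    by (simp add: misses_def miss_def)
  have prefix: "(cs @ [x]) ! j = cs ! j" if "j < length cs" for j
    using that by (simp add: nth_append)
  have old: "miss (cs @ [x]) i \<longleftrightarrow> miss cs i" if "i < length cs" for i
    unfolding miss_def using that prefix by (metis order.strict_trans)
  have last: "miss (cs @ [x]) (length cs) \<longleftrightarrow> new"
  proof -
    have "miss (cs @ [x]) (length cs) \<longleftrightarrow> (\<exists>j'<length cs. \<exists>l<k. cs ! j' \<in> P l \<and> x \<in> P l)"
      unfolding miss_def using prefix by (metis nth_append_length)
    also have "\<dots> \<longleftrightarrow> new"
      unfolding new_def by (metis in_set_conv_nth)
    finally show ?thesis .
  qed
  have "{i. i < length (cs @ [x]) \<and> miss (cs @ [x]) i}
      = {i. i < length cs \<and> miss cs i} \<union> {i. i = length cs \<and> new}"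
    using old last by (auto simp: less_Suc_eq)
  then show ?thesis
    unfolding misses_eq new_def[symmetric] by (simp add: card_Un_disjoint)
qed

definition uncovered :: "nat \<Rightarrow> (nat \<Rightarrow> 'a set) \<Rightarrow> 'a list \<Rightarrow> nat set" where
  "uncovered k P cs = {j. j < k \<and> P j \<inter> set cs = {}}"

locale seeding_partition =
  fixes X :: "'a::euclidean_space set" and k :: nat and P :: "nat \<Rightarrow> 'a set"
  assumes finite_X: "finite X" and X_ne: "X \<noteq> {}"
    and clusters_cover: "(\<Union>j<k. P j) = X"
    and clusters_disjoint: "i < k \<Longrightarrow> j < k \<Longrightarrow> i \<noteq> j \<Longrightarrow> P i \<inter> P j = {}"

lemma seeding_partition_if_optimal_clustering:
  "finite X \<Longrightarrow> X \<noteq> {} \<Longrightarrow> optimal_clustering X k P \<Longrightarrow> seeding_partition X k P"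
  unfolding optimal_clustering_def by unfold_locales auto

context seeding_partition
begin

lemma cluster_subset: "j < k \<Longrightarrow> P j \<subseteq> X"
  using clusters_cover by auto

lemma finite_cluster: "j < k \<Longrightarrow> finite (P j)"
  using cluster_subset finite_X finite_subset by blast

lemma cluster_unique: "x \<in> P i \<Longrightarrow> x \<in> P j \<Longrightarrow> i < k \<Longrightarrow> j < k \<Longrightarrow> i = j"
  using clusters_disjoint by blast

lemma cluster_exists:
  assumes "x \<in> X"
  obtains j where "j < k" "x \<in> P j"
  using assms clusters_cover by auto

lemma sum_over_clusters: "(\<Sum>x\<in>X. f x) = (\<Sum>j<k. \<Sum>x\<in>P j. f x)"
  unfolding clusters_cover[symmetric]
  by (rule sum.UNION_disjoint) (auto intro: finite_cluster dest: clusters_disjoint)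

lemma uncovered_snoc: "j < k \<Longrightarrow> x \<in> P j \<Longrightarrow> uncovered k P (cs @ [x]) = uncovered k P cs - {j}"
  unfolding uncovered_def using cluster_unique by auto

lemma uncovered_snoc_covered:
  assumes "j < k" "x \<in> P j" "P j \<inter> set cs \<noteq> {}"
  shows "uncovered k P (cs @ [x]) = uncovered k P cs"
proof -
  have "j \<notin> uncovered k P cs" using assms(3) by (simp add: uncovered_def)
  then show ?thesis by (simp add: uncovered_snoc[OF assms(1,2)])
qed

lemma card_uncovered_snoc_new:
  assumes "j < k" "x \<in> P j" "P j \<inter> set cs = {}"
  shows "card (uncovered k P (cs @ [x])) + 1 = card (uncovered k P cs)"
proof -
  have "j \<in> uncovered k P cs" using assms by (simp add: uncovered_def)
  moreover have "finite (uncovered k P cs)" by (simp add: uncovered_def)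
  ultimately show ?thesis
    using card_gt_0_iff[of "uncovered k P cs"] by (auto simp: uncovered_snoc[OF assms(1,2)])
qed

lemma Htilde_cl_snoc_other_cluster:
  assumes "l < k" "j < k" "l \<noteq> j" "x \<in> P j"
  shows "Htilde_cl (P l) (cs @ [x]) = Htilde_cl (P l) cs"
proof (cases "P l \<inter> set cs = {}")
  case True
  have "x \<notin> P l" using assms cluster_unique by blast
  with True show ?thesis by (rule Htilde_cl_snoc_outside)
qed (rule Htilde_cl_snoc_covered)

lemma Htilde_snoc_covered:
  assumes "j < k" "x \<in> P j" "P j \<inter> set cs \<noteq> {}"
  shows "Htilde k P (cs @ [x]) = Htilde k P cs"
  unfolding Htilde_def
proof (rule sum.cong)
  fix l assume "l \<in> {..<k}"
  then show "Htilde_cl (P l) (cs @ [x]) = Htilde_cl (P l) cs"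
    using assms Htilde_cl_snoc_other_cluster[of l j x cs]
    by (cases "l = j") (auto simp: Htilde_cl_snoc_covered)
qed simp

lemma Htilde_snoc_new:
  assumes "j < k" "x \<in> P j" "P j \<inter> set cs = {}"
  shows "Htilde k P (cs @ [x]) = Htilde k P cs - 5 * OPT 1 (P j) + cost_set (P j) (insert x (set cs))"
proof -
  have others: "(\<Sum>l\<in>{..<k} - {j}. Htilde_cl (P l) (cs @ [x])) = (\<Sum>l\<in>{..<k} - {j}. Htilde_cl (P l) cs)"
    using assms by (intro sum.cong refl Htilde_cl_snoc_other_cluster) auto
  have "Htilde k P (cs @ [x]) = Htilde_cl (P j) (cs @ [x]) + (\<Sum>l\<in>{..<k} - {j}. Htilde_cl (P l) cs)"
    unfolding Htilde_def others[symmetric] using assms(1) by (simp add: sum.remove)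
  moreover have "Htilde k P cs = 5 * OPT 1 (P j) + (\<Sum>l\<in>{..<k} - {j}. Htilde_cl (P l) cs)"
    unfolding Htilde_def using assms by (simp add: sum.remove Htilde_cl_def)
  ultimately show ?thesis using assms(2,3) by (simp add: Htilde_cl_snoc_new)
qed

text \<open>Every centre either covers a new cluster or is a miss.\<close>
lemma card_uncovered_add_length:
  "set cs \<subseteq> X \<Longrightarrow> card (uncovered k P cs) + length cs = k + misses k P cs"
proof (induction cs rule: rev_induct)
  case Nil
  then show ?case by (simp add: uncovered_def misses_def)
next
  case (snoc x cs)
  obtain j where j: "j < k" "x \<in> P j" using snoc.prems cluster_exists by auto
  have new: "(\<exists>y\<in>set cs. \<exists>l<k. y \<in> P l \<and> x \<in> P l) \<longleftrightarrow> P j \<inter> set cs \<noteq> {}"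
    using j cluster_unique by blast
  show ?case
  proof (cases "P j \<inter> set cs = {}")
    case True
    then have "card (uncovered k P (cs @ [x])) + 1 = card (uncovered k P cs)"
      by (rule card_uncovered_snoc_new[OF j])
    moreover have "misses k P (cs @ [x]) = misses k P cs"
      using True new by (simp add: misses_snoc)
    ultimately show ?thesis using snoc by simp
  next
    case False
    then have "uncovered k P (cs @ [x]) = uncovered k P cs"
      by (rule uncovered_snoc_covered[OF j])
    then show ?thesis using snoc False new by (simp add: misses_snoc)
  qed
qed

section \<open>The potential bound\<close>

text \<open>The bound on the expected final value of U(P i, -) when R steps remain after the prefix cs.\<close>
definition seeding_potential :: "nat \<Rightarrow> nat \<Rightarrow> 'a list \<Rightarrow> real" where
  "seeding_potential i R cs =
     potential (int R - int (card (uncovered k P cs))) (Htilde k P cs) (U (P i) (set cs))"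

lemma seeding_potential_nonneg: "cs \<noteq> [] \<Longrightarrow> 0 \<le> seeding_potential i R cs"
  unfolding seeding_potential_def by (intro potential_nonneg U_nonneg Htilde_nonneg) auto

lemma seeding_potential_snoc_target:
  "x \<in> P i \<Longrightarrow> seeding_potential i R (cs @ [x]) = 0"
  by (simp add: seeding_potential_def potential_def U_def)

lemma seeding_potential_snoc_covered:
  assumes "cs \<noteq> []" "j < k" "x \<in> P j" "P j \<inter> set cs \<noteq> {}"
  shows "seeding_potential i R (cs @ [x]) \<le> seeding_potential i R cs"
proof -
  have unc: "uncovered k P (cs @ [x]) = uncovered k P cs"
    using assms(2-4) by (rule uncovered_snoc_covered)
  show ?thesis
    unfolding seeding_potential_def Htilde_snoc_covered[OF assms(2-4)] unc
    using assms(1) by (intro potential_mono U_nonneg U_snoc_le Htilde_nonneg) auto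
qed

lemma seeding_potential_snoc_new:
  assumes "cs \<noteq> []" "j < k" "x \<in> P j" "P j \<inter> set cs = {}"
  shows "seeding_potential i R (cs @ [x])
      \<le> potential (int (Suc R) - int (card (uncovered k P cs)))
           (Htilde k P cs - 5 * OPT 1 (P j) + cost_set (P j) (insert x (set cs))) (U (P i) (set cs))"
proof -
  have "card (uncovered k P (cs @ [x])) + 1 = card (uncovered k P cs)"
    using assms(2-4) by (rule card_uncovered_snoc_new)
  then have m: "int R - int (card (uncovered k P (cs @ [x]))) = int (Suc R) - int (card (uncovered k P cs))"
    by linarith
  show ?thesis
    unfolding seeding_potential_def Htilde_snoc_new[OF assms(2-4), symmetric] m
    using assms(1) by (intro potential_mono U_nonneg U_snoc_le Htilde_nonneg) auto
qed

lemma sum_cluster_seeding_potential_snoc_le: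
  assumes cs: "cs \<noteq> []" and i: "i < k" "0 < U (P i) (set cs)" and j: "j < k"
  shows "(\<Sum>x\<in>P j. cost_pt x (set cs) * seeding_potential i R (cs @ [x]))
      \<le> (if j = i then 0
          else if P j \<inter> set cs \<noteq> {} then cost_set (P j) (set cs) * seeding_potential i R cs
          else cost_set (P j) (set cs) * seeding_potential i (Suc R) cs)"
proof -
  have C: "finite (set cs)" "set cs \<noteq> {}" using cs by auto
  have weight: "0 \<le> cost_pt x (set cs)" for x using cost_pt_nonneg[OF C] .
  consider "j = i" | "j \<noteq> i" "P j \<inter> set cs \<noteq> {}" | "j \<noteq> i" "P j \<inter> set cs = {}" by blast
  then show ?thesis
  proof cases
    case 1
    then show ?thesis by (simp add: seeding_potential_snoc_target)
  next
    case 2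
    have "(\<Sum>x\<in>P j. cost_pt x (set cs) * seeding_potential i R (cs @ [x]))
        \<le> (\<Sum>x\<in>P j. cost_pt x (set cs) * seeding_potential i R cs)"
      using 2 cs j weight by (intro sum_mono mult_left_mono seeding_potential_snoc_covered) auto
    then show ?thesis using 2 by (simp add: cost_set_def sum_distrib_right)
  next
    case 3
    define m where "m = int (Suc R) - int (card (uncovered k P cs))"
    define H' where "H' x = Htilde k P cs - 5 * OPT 1 (P j) + cost_set (P j) (insert x (set cs))" for x
    have H': "0 \<le> H' x" if "x \<in> P j" for x
      using Htilde_nonneg[of "cs @ [x]" k P] Htilde_snoc_new[OF j that 3(2)] by (simp add: H'_def)
    have "(\<Sum>x\<in>P j. cost_pt x (set cs) * seeding_potential i R (cs @ [x]))
        \<le> (\<Sum>x\<in>P j. cost_pt x (set cs) * potential m (H' x) (U (P i) (set cs)))"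
      unfolding m_def H'_def
      using 3 cs j weight by (intro sum_mono mult_left_mono seeding_potential_snoc_new) auto
    also have "\<dots> \<le> cost_set (P j) (set cs) * seeding_potential i (Suc R) cs"
    proof (cases "P j = {}")
      case False
      show ?thesis
        unfolding seeding_potential_def m_def[symmetric] H'_def
        by (rule sum_D2_weighted_potential_le)
           (use False C 3 i j finite_cluster H' in \<open>auto simp: H'_def\<close>)
    qed (simp add: cost_set_def)
    finally show ?thesis using 3 by simp
  qed
qed

text \<open>The one-step inequality: potential_rec pays for the covered clusters, whose centres
  lower m, out of the mass V of the target cluster, whose centres make U vanish.\<close>
lemma sum_seeding_potential_snoc_le:
  assumes cs: "cs \<noteq> []" and i: "i < k" "0 < U (P i) (set cs)"
  shows "(\<Sum>x\<in>X. cost_pt x (set cs) * seeding_potential i R (cs @ [x]))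
      \<le> cost_set X (set cs) * seeding_potential i (Suc R) cs"
proof -
  define C where "C = set cs"
  define V where "V = U (P i) C"
  define G where "G = seeding_potential i (Suc R) cs"
  define G' where "G' = seeding_potential i R cs"
  define cov where "cov = (\<Sum>j<k. if P j \<inter> C \<noteq> {} then cost_set (P j) C else 0)"
  have C: "finite C" "C \<noteq> {}" using cs by (auto simp: C_def)
  have i_unc: "P i \<inter> C = {}" using i by (simp add: U_pos_imp_uncovered C_def)
  then have V: "V = cost_set (P i) C" by (simp add: V_def U_def)
  have cov: "0 \<le> cov" "cov \<le> Htilde k P cs"
    unfolding cov_def C_def using C sum_covered_cost_set_le_Htilde[OF cs]
    by (auto intro!: sum_nonneg cost_set_nonneg simp: C_def)
  have rec: "cov * (G' - G) \<le> V * G"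
  proof -
    have m: "int R - int (card (uncovered k P cs)) = int (Suc R) - int (card (uncovered k P cs)) - 1"
      by simp
    show ?thesis
      unfolding G_def G'_def seeding_potential_def V_def C_def m
      using i cov cs by (intro potential_rec Htilde_nonneg) (auto simp: C_def)
  qed
  have "(\<Sum>x\<in>X. cost_pt x C * seeding_potential i R (cs @ [x]))
      = (\<Sum>j<k. \<Sum>x\<in>P j. cost_pt x C * seeding_potential i R (cs @ [x]))"
    by (rule sum_over_clusters)
  also have "\<dots> \<le> (\<Sum>j<k. if j = i then 0
          else if P j \<inter> C \<noteq> {} then cost_set (P j) C * G' else cost_set (P j) C * G)"
    unfolding C_def G_def G'_def
    using cs i by (intro sum_mono sum_cluster_seeding_potential_snoc_le) auto
  also have "\<dots> = (\<Sum>j<k. cost_set (P j) C * G + (if P j \<inter> C \<noteq> {} then cost_set (P j) C else 0) * (G' - G)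
          - (if j = i then cost_set (P j) C * G else 0))"
    using i_unc by (intro sum.cong) (auto simp: algebra_simps)
  also have "\<dots> = cost_set X C * G + cov * (G' - G) - V * G"
    using i V
    by (simp add: sum.distrib sum_subtractf sum_distrib_right[symmetric] cov_def
        cost_set_def sum_over_clusters[symmetric])
  also have "\<dots> \<le> cost_set X C * G" using rec by simp
  finally show ?thesis unfolding C_def G_def .
qed

lemma expectation_U_eq_0:
  assumes "i < k" "cs \<noteq> []" "U (P i) (set cs) = 0"
  shows "measure_pmf.expectation (kpp_run X R cs) (\<lambda>ds. U (P i) (set ds)) = 0"
proof -
  have "U (P i) (set ds) = 0" if "ds \<in> set_pmf (kpp_run X R cs)" for ds
    using set_pmf_kpp_run[OF finite_X X_ne that] finite_cluster[OF assms(1)] assms(2,3)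
    by (auto intro: U_eq_0_mono)
  then have "measure_pmf.expectation (kpp_run X R cs) (\<lambda>ds. U (P i) (set ds))
      = measure_pmf.expectation (kpp_run X R cs) (\<lambda>_. 0)"
    by (intro integral_cong_AE) (simp_all add: AE_measure_pmf_iff del: kpp_run.simps)
  then show ?thesis by simp
qed

lemma U_le_cost_set:
  assumes "i < k" "finite C" "C \<noteq> {}"
  shows "U (P i) C \<le> cost_set X C"
proof (cases "P i \<inter> C = {}")
  case True
  have "cost_set (P i) C \<le> cost_set X C"
    unfolding cost_set_def using assms cluster_subset finite_X
    by (intro sum_mono2 cost_pt_nonneg) auto
  then show ?thesis using True by (simp add: U_def)
qed (use assms in \<open>simp add: U_def cost_set_nonneg\<close>)

lemma expectation_U_le_seeding_potential:
  assumes "i < k" "cs \<noteq> []" "set cs \<subseteq> X"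
  shows "measure_pmf.expectation (kpp_run X R cs) (\<lambda>ds. U (P i) (set ds)) \<le> seeding_potential i R cs"
  using assms(2,3)
proof (induction R arbitrary: cs)
  case 0
  show ?case
  proof (cases "U (P i) (set cs) = 0")
    case False
    then have "0 < U (P i) (set cs)" using U_nonneg[of "set cs" "P i"] 0 by fastforce
    then have "i \<in> uncovered k P cs" using assms(1) by (simp add: uncovered_def U_pos_imp_uncovered)
    then have "card (uncovered k P cs) > 0" by (auto simp: uncovered_def card_gt_0_iff)
    then show ?thesis by (simp add: seeding_potential_def potential_eq_V_if_neg)
  qed (simp add: seeding_potential_def potential_def)
next
  case (Suc R)
  define C where "C = set cs"
  define T where "T = cost_set X C"
  have C: "finite C" "C \<noteq> {}" using Suc.prems by (auto simp: C_def)
  consider "U (P i) C = 0" | "0 < U (P i) C" using U_nonneg[OF C, of "P i"] by fastforce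
  then show ?case
  proof cases
    case 1
    then show ?thesis
      using expectation_U_eq_0[OF assms(1) Suc.prems(1)] seeding_potential_nonneg[OF Suc.prems(1)]
      by (simp add: C_def del: kpp_run.simps)
  next
    case 2
    then have T: "T > 0" using U_le_cost_set[OF assms(1) C] by (simp add: T_def)
    have "measure_pmf.expectation (kpp_run X (Suc R) cs) (\<lambda>ds. U (P i) (set ds))
        = (\<Sum>x\<in>X. cost_pt x C / T * measure_pmf.expectation (kpp_run X R (cs @ [x])) (\<lambda>ds. U (P i) (set ds)))"
      unfolding C_def T_def using Suc.prems T
      by (intro expectation_kpp_run_Suc finite_X X_ne) (auto simp: C_def T_def)
    also have "\<dots> \<le> (\<Sum>x\<in>X. cost_pt x C / T * seeding_potential i R (cs @ [x]))"
      using Suc.prems cost_pt_nonneg[OF C] T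
      by (intro sum_mono mult_left_mono Suc.IH) auto
    also have "\<dots> = (\<Sum>x\<in>X. cost_pt x C * seeding_potential i R (cs @ [x])) / T"
      by (simp add: sum_divide_distrib)
    also have "\<dots> \<le> T * seeding_potential i (Suc R) cs / T"
      unfolding C_def T_def using 2 Suc.prems assms(1) T
      by (intro divide_right_mono sum_seeding_potential_snoc_le) (auto simp: C_def T_def)
    finally show ?thesis using T by simp
  qed
qed

end

theorem mainTheorem7:
  fixes X :: "'a::euclidean_space set" and k \<Delta> t i :: nat and P :: "nat \<Rightarrow> 'a set"
    and cs :: "'a list"
  assumes "finite X" and "X \<noteq> {}" and "0 < k"
    and "optimal_clustering X k P"
    and "i < k"
    and "1 \<le> t" and "t \<le> k + \<Delta>"
    and "cs \<in> set_pmf (kpp_run X t [])"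
    and "int \<Delta> - int (misses k P cs) \<ge> 2"
  shows "measure_pmf.expectation (kpp_run X (k + \<Delta> - t) cs) (\<lambda>ds. U (P i) (set ds))
         \<le> Htilde k P cs / (exp 1 * (real \<Delta> - real (misses k P cs) - 1))"
proof -
  interpret seeding_partition X k P
    using assms(1,2,4) by (rule seeding_partition_if_optimal_clustering)
  have cs: "length cs = t" "set cs \<subseteq> X"
    using set_pmf_kpp_run[OF assms(1,2,8)] by auto
  then have "cs \<noteq> []" using assms(6) by auto
  have "card (uncovered k P cs) + t = k + misses k P cs"
    using card_uncovered_add_length[OF cs(2)] cs(1) by simp
  then have m: "int (k + \<Delta> - t) - int (card (uncovered k P cs)) = int \<Delta> - int (misses k P cs)"
    using assms(7) by linarith
  have "measure_pmf.expectation (kpp_run X (k + \<Delta> - t) cs) (\<lambda>ds. U (P i) (set ds))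
      \<le> seeding_potential i (k + \<Delta> - t) cs"
    using assms(5) \<open>cs \<noteq> []\<close> cs(2) by (rule expectation_U_le_seeding_potential)
  also have "\<dots> \<le> Htilde k P cs / (exp 1 * (real_of_int (int \<Delta> - int (misses k P cs)) - 1))"
    unfolding seeding_potential_def m
    using assms(9) \<open>cs \<noteq> []\<close> by (intro potential_le U_nonneg Htilde_nonneg) auto
  finally show ?thesis by simp
qed

end
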